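(* Let $G>I$ be a finite group with trivial center $Z(G)=I$ and let $\sigma_1,\sigma_2\in G$ with $G=\langle\sigma_1,\sigma_2\rangle$ and $o(\sigma_1\sigma_2)=2$. Then: (a) For $e_1=[\sigma_1,\sigma_1,\sigma_2,\sigma_1\sigma_2\sigma_1^{-1}]$ and $e_2=e_1^{\beta_{13}}$ we have $e_2=[\sigma_1,\sigma_2\sigma_1\sigma_2^{-1},\sigma_2,\sigma_2]$, and $Z_1=\{e_1,e_2\}$ is an orbit of length $2$ under $B_4$, on which $\beta_{12}$ fixes $e_1$ and $e_2$, $\beta_{13}$ and $\beta_{14}$ interchange $e_1$ and $e_2$, $\rho_4(B_4)\cong C_2$, and $g_{Z_1}=0$. (b) For $e_3=[\sigma_1,\sigma_2,\sigma_1,\sigma_2]$ and $e_4=e_3^{\beta_{12}}$ we have $e_4=[\sigma_1,\sigma_2,\sigma_2^{-1}\sigma_1\sigma_2,\sigma_1\sigma_2\sigma_1^{-1}]$, and $Z_2=\{e_3,e_4\}$ is an orbit of length $2$ under $B_4$, on which $\beta_{12}$ and $\beta_{14}$ interchange $e_3,e_4$, $\beta_{13}$ fixes $e_3$ and $e_4$, $\rho_4(B_4)\cong C_2$, and $g_{Z_2}=0$. (c) For $e_5=[\sigma_1,\sigma_2,\sigma_2,\sigma_2^{-1}\sigma_1\sigma_2]$ and $e_6=e_5^{\beta_{12}}$ we have $e_6=[\sigma_1,\sigma_2,\sigma_1\sigma_2\sigma_1^{-1},\sigma_1]$, and $Z_3=\{e_5,e_6\}$ is an orbit of length $2$ under $B_4$,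 on which $\beta_{12}$ and $\beta_{13}$ interchange $e_5,e_6$, $\beta_{14}$ fixes $e_5$ and $e_6$, $\rho_4(B_4)\cong C_2$, and $g_{Z_3}=0$.
   Context: $\iota$ denotes the identity of $G$ and $I$ the trivial group. For conjugacy classes $C_1,\dots,C_4$ of $G$, $\Sigma^i(C_1,\dots,C_4)$ is the set of $G$-conjugacy classes $[\sigma_1,\dots,\sigma_4]$ (under simultaneous conjugation) of tuples with $\sigma_j\in C_j$, $\langle\sigma_1,\dots,\sigma_4\rangle=G$, $\sigma_1\sigma_2\sigma_3\sigma_4=\iota$. The Hurwitz braid group $H_4=\langle\beta_2,\beta_3,\beta_4\rangle$ acts from the right by $[\underline{\sigma}]^{\beta_2}=[\sigma_1\sigma_2\sigma_1^{-1},\sigma_1,\sigma_3,\sigma_4]$, $[\underline{\sigma}]^{\beta_3}=[\sigma_1,\sigma_2\sigma_3\sigma_2^{-1},\sigma_2,\sigma_4]$, $[\underline{\sigma}]^{\beta_4}=[\sigma_1,\sigma_2,\sigma_3\sigma_4\sigma_3^{-1},\sigma_3]$. The pure braid group $B_4$ is generated by $\beta_{12}=\beta_2^2$, $\beta_{13}=\beta_2^{-1}\beta_3^2\beta_2$, $\beta_{14}=\beta_2^{-1}\beta_3^{-1}\beta_4^2\beta_3\beta_2$, $\beta_{23}=\beta_3^2$, $\beta_{24}=\beta_3^{-1}\beta_4^2\beta_3$, $\beta_{34}=\beta_4^2$ and preserves each $\Sigma^i(C_1,\dots,C_4)$; $\rho_4$ denotes the induced permutation representation. For a $B_4$-orbit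 $Z$, let $z_{1j}$ be the number of cycles (fixed points included) of $\rho_4(\beta_{1j})$ on $Z$; the genus is $g_Z=1-|Z|+\frac12(3|Z|-z_{12}-z_{13}-z_{14})$. *)

theory Defs
  imports "HOL-Algebra.Algebra"
begin

definition grp_center :: "('a, 'b) monoid_scheme \<Rightarrow> 'a set" where
  "grp_center G = {z \<in> carrier G. \<forall>h \<in> carrier G. z \<otimes>\<^bsub>G\<^esub> h = h \<otimes>\<^bsub>G\<^esub> z}"

definition conj_class :: "('a, 'b) monoid_scheme \<Rightarrow> 'a \<Rightarrow> 'a set" where
  "conj_class G x = {g \<otimes>\<^bsub>G\<^esub> x \<otimes>\<^bsub>G\<^esub> inv\<^bsub>G\<^esub> g | g. g \<in> carrier G}"

text \<open>Tuples are lists of length 4; [sigma] is the class under simultaneous conjugation.\<close>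
definition tclass :: "('a, 'b) monoid_scheme \<Rightarrow> 'a list \<Rightarrow> 'a list set" where
  "tclass G t = {map (\<lambda>x. g \<otimes>\<^bsub>G\<^esub> x \<otimes>\<^bsub>G\<^esub> inv\<^bsub>G\<^esub> g) t | g. g \<in> carrier G}"

definition Sigma_i :: "('a, 'b) monoid_scheme \<Rightarrow> 'a set \<Rightarrow> 'a set \<Rightarrow> 'a set \<Rightarrow> 'a set \<Rightarrow> 'a list set set" where
  "Sigma_i G C1 C2 C3 C4 = {tclass G t | t. length t = 4 \<and>
      t!0 \<in> C1 \<and> t!1 \<in> C2 \<and> t!2 \<in> C3 \<and> t!3 \<in> C4 \<and>
      generate G (set t) = carrier G \<and>
      t!0 \<otimes>\<^bsub>G\<^esub> t!1 \<otimes>\<^bsub>G\<^esub> t!2 \<otimes>\<^bsub>G\<^esub> t!3 = \<one>\<^bsub>G\<^esub>}"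

text \<open>A letter (i, True) is beta_i, (i, False) is beta_i inverse, for i in {2,3,4}.
  beta_i acts on positions i-1, i (1-based), i.e. list indices i-2, i-1.\<close>
definition hstep :: "('a, 'b) monoid_scheme \<Rightarrow> nat \<times> bool \<Rightarrow> 'a list \<Rightarrow> 'a list" where
  "hstep G l t = (let i = fst l; x = t ! (i - 2); y = t ! (i - 1) in
     if snd l then t[i - 2 := x \<otimes>\<^bsub>G\<^esub> y \<otimes>\<^bsub>G\<^esub> inv\<^bsub>G\<^esub> x, i - 1 := x]
     else t[i - 2 := y, i - 1 := inv\<^bsub>G\<^esub> y \<otimes>\<^bsub>G\<^esub> x \<otimes>\<^bsub>G\<^esub> y])"

text \<open>Right action of a braid word, letters applied from left to right.\<close>
definition act_word :: "('a, 'b) monoid_scheme \<Rightarrow> (nat \<times> bool) list \<Rightarrow> 'a list \<Rightarrow> 'a list" where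
  "act_word G w t = fold (hstep G) w t"

definition inv_word :: "(nat \<times> bool) list \<Rightarrow> (nat \<times> bool) list" where
  "inv_word w = rev (map (\<lambda>(i, b). (i, \<not> b)) w)"

definition beta12 :: "(nat \<times> bool) list" where "beta12 = [(2,True),(2,True)]"
definition beta13 :: "(nat \<times> bool) list" where
  "beta13 = inv_word [(2,True)] @ [(3,True),(3,True)] @ [(2,True)]"
definition beta14 :: "(nat \<times> bool) list" where
  "beta14 = inv_word [(3,True),(2,True)] @ [(4,True),(4,True)] @ [(3,True),(2,True)]"
definition beta23 :: "(nat \<times> bool) list" where "beta23 = [(3,True),(3,True)]"
definition beta24 :: "(nat \<times> bool) list" where
  "beta24 = inv_word [(3,True)] @ [(4,True),(4,True)] @ [(3,True)]"
definition beta34 :: "(nat \<times> bool) list" where "beta34 = [(4,True),(4,True)]"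

text \<open>Words representing elements of the pure braid group B_4: products of the
  generators beta_ij and their inverses.\<close>
definition pure_gens :: "(nat \<times> bool) list set" where
  "pure_gens = {beta12, beta13, beta14, beta23, beta24, beta34}"

definition pure_words :: "(nat \<times> bool) list set" where
  "pure_words = {concat ws | ws. set ws \<subseteq> pure_gens \<union> inv_word ` pure_gens}"

definition cact :: "('a, 'b) monoid_scheme \<Rightarrow> (nat \<times> bool) list \<Rightarrow> 'a list set \<Rightarrow> 'a list set" where
  "cact G w A = image (act_word G w) A"

definition B4_orbit :: "('a, 'b) monoid_scheme \<Rightarrow> 'a list set \<Rightarrow> 'a list set set" where
  "B4_orbit G A = {cact G w A | w. w \<in> pure_words}"

definition rho4 :: "('a, 'b) monoid_scheme \<Rightarrow> 'a list set set \<Rightarrow> (nat \<times> bool) list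
    \<Rightarrow> 'a list set \<Rightarrow> 'a list set" where
  "rho4 G Z w = restrict (cact G w) Z"

definition rho4_image :: "('a, 'b) monoid_scheme \<Rightarrow> 'a list set set
    \<Rightarrow> ('a list set \<Rightarrow> 'a list set) set" where
  "rho4_image G Z = {rho4 G Z w | w. w \<in> pure_words}"

definition ncycles :: "('c \<Rightarrow> 'c) \<Rightarrow> 'c set \<Rightarrow> nat" where
  "ncycles f Z = card {{(f ^^ n) x | n. True} | x. x \<in> Z}"

definition genus :: "('a, 'b) monoid_scheme \<Rightarrow> 'a list set set \<Rightarrow> real" where
  "genus G Z = 1 - real (card Z) +
     (3 * real (card Z) - real (ncycles (cact G beta12) Z) - real (ncycles (cact G beta13) Z)
        - real (ncycles (cact G beta14) Z)) / 2"

end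

theory Submission
  imports Defs
begin

text \<open>
  Put \<open>c = s1 s2\<close>, an involution, so that \<open>s2 = s1\<inverse> c\<close>. For each of the three pairs of
  tuples, every generator \<open>\<beta>\<^sub>i\<^sub>j\<close> of the pure braid group maps each tuple to a simultaneous
  conjugate of itself or of its partner, with an explicit word in \<open>s1\<close>, \<open>c\<close> as conjugator;
  these identities hold already in the free product \<open>\<langle>s1\<rangle> * \<langle>c | c\<^sup>2\<rangle>\<close>. Hence every pure
  braid fixes or swaps the two classes, so they form an orbit on which \<open>B\<^sub>4\<close> acts through
  \<open>C\<^sub>2\<close>, and the genus is \<open>1 - 2 + (6 - 2 - 1 - 1)/2 = 0\<close>. The two classes differ: an
  element conjugating one tuple into the other fixes \<open>s1\<close> and \<open>s2\<close>, hence is central, hence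
  trivial; then \<open>s1\<close> and \<open>s2\<close> would commute, making \<open>G\<close> abelian and so trivial.
\<close>

context group
begin

lemma m_inv_cancel_left: "x \<in> carrier G \<Longrightarrow> y \<in> carrier G \<Longrightarrow> x \<otimes> (inv x \<otimes> y) = y"
  by (simp add: m_assoc [symmetric])

lemma inv_m_cancel_left: "x \<in> carrier G \<Longrightarrow> y \<in> carrier G \<Longrightarrow> inv x \<otimes> (x \<otimes> y) = y"
  by (simp add: m_assoc [symmetric])

lemmas group_word_simps = m_assoc inv_mult_group m_inv_cancel_left inv_m_cancel_left

lemma conj_fixed_iff_commute:
  "x \<in> carrier G \<Longrightarrow> g \<in> carrier G \<Longrightarrow> g \<otimes> x \<otimes> inv g = x \<longleftrightarrow> g \<otimes> x = x \<otimes> g"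
  by (metis inv_solve_right m_closed)

lemma commuting_with_generators_central:
  assumes gen: "generate G S = carrier G" and S: "S \<subseteq> carrier G" and g: "g \<in> carrier G"
    and comm: "\<And>s. s \<in> S \<Longrightarrow> g \<otimes> s = s \<otimes> g"
  shows "g \<in> grp_center G"
proof -
  let ?C = "stabilizer G (\<lambda>h. \<lambda>x \<in> carrier G. h \<otimes> x \<otimes> inv h) g"
  have "subgroup ?C G"
    using group_action.stabilizer_subgroup [OF action_by_conjugation g] .
  moreover have "S \<subseteq> ?C"
    using S g comm by (auto simp: stabilizer_def conj_fixed_iff_commute)
  ultimately have C: "carrier G \<subseteq> ?C"
    using gen generate_subgroup_incl by metis
  have "g \<otimes> h = h \<otimes> g" if h: "h \<in> carrier G" for h
  proof -
    have "h \<otimes> g \<otimes> inv h = g"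
      using C h g by (auto simp: stabilizer_def)
    then show ?thesis
      using g h by (simp add: conj_fixed_iff_commute)
  qed
  then show ?thesis
    using g by (simp add: grp_center_def)
qed

lemma conj_class_self: "x \<in> carrier G \<Longrightarrow> x \<in> conj_class G x"
  unfolding conj_class_def by (rule CollectI, rule exI [of _ \<one>]) simp

lemma conj_class_conj: "x \<in> carrier G \<Longrightarrow> y \<in> carrier G \<Longrightarrow> y \<otimes> x \<otimes> inv y \<in> conj_class G x"
  unfolding conj_class_def by blast

lemma conj_class_conj_inv: "x \<in> carrier G \<Longrightarrow> y \<in> carrier G \<Longrightarrow> inv y \<otimes> x \<otimes> y \<in> conj_class G x"
  unfolding conj_class_def by (rule CollectI, rule exI [of _ "inv y"]) simp

end

section \<open>The Hurwitz action on quadruples and on their classes\<close>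

text \<open>\<^const>\<open>hstep\<close> reads the entries at positions \<open>i - 2\<close> and \<open>i - 1\<close>, so only the letters
  with \<open>i \<in> {2, 3, 4}\<close> act sensibly on quadruples.\<close>

definition braid_word :: "(nat \<times> bool) list \<Rightarrow> bool" where
  "braid_word w \<longleftrightarrow> fst ` set w \<subseteq> {2, 3, 4}"

lemma braid_word_pure_gens: "w \<in> pure_gens \<Longrightarrow> braid_word w"
  by (auto simp: pure_gens_def beta12_def beta13_def beta14_def beta23_def beta24_def
      beta34_def inv_word_def braid_word_def)

lemma braid_word_betas [simp]:
  "braid_word beta12" "braid_word beta13" "braid_word beta14"
  "braid_word beta23" "braid_word beta24" "braid_word beta34"
  by (simp_all add: braid_word_pure_gens pure_gens_def)

lemma act_word_Nil [simp]: "act_word G [] t = t"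
  and act_word_Cons [simp]: "act_word G (l # w) t = act_word G w (hstep G l t)"
  and act_word_append: "act_word G (u @ w) t = act_word G w (act_word G u t)"
  by (simp_all add: act_word_def)

lemma cact_Nil [simp]: "cact G [] A = A"
  and cact_append: "cact G (u @ w) A = cact G w (cact G u A)"
  by (simp_all add: cact_def act_word_append image_image)

lemma hstep_quadruple_simps:
  "hstep G (2, True) [a, b, c, d] = [a \<otimes>\<^bsub>G\<^esub> b \<otimes>\<^bsub>G\<^esub> inv\<^bsub>G\<^esub> a, a, c, d]"
  "hstep G (2, False) [a, b, c, d] = [b, inv\<^bsub>G\<^esub> b \<otimes>\<^bsub>G\<^esub> a \<otimes>\<^bsub>G\<^esub> b, c, d]"
  "hstep G (3, True) [a, b, c, d] = [a, b \<otimes>\<^bsub>G\<^esub> c \<otimes>\<^bsub>G\<^esub> inv\<^bsub>G\<^esub> b, b, d]"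
  "hstep G (3, False) [a, b, c, d] = [a, c, inv\<^bsub>G\<^esub> c \<otimes>\<^bsub>G\<^esub> b \<otimes>\<^bsub>G\<^esub> c, d]"
  "hstep G (4, True) [a, b, c, d] = [a, b, c \<otimes>\<^bsub>G\<^esub> d \<otimes>\<^bsub>G\<^esub> inv\<^bsub>G\<^esub> c, c]"
  "hstep G (4, False) [a, b, c, d] = [a, b, d, inv\<^bsub>G\<^esub> d \<otimes>\<^bsub>G\<^esub> c \<otimes>\<^bsub>G\<^esub> d]"
  by (simp_all add: hstep_def)

context group
begin

definition quadruple :: "'a list \<Rightarrow> bool" where
  "quadruple t \<longleftrightarrow> length t = 4 \<and> set t \<subseteq> carrier G"

definition conj_tuple :: "'a \<Rightarrow> 'a list \<Rightarrow> 'a list" where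
  "conj_tuple g t = map (\<lambda>x. g \<otimes> x \<otimes> inv g) t"

lemma quadrupleE:
  assumes "quadruple t"
  obtains a b c d where "t = [a, b, c, d]"
    and "a \<in> carrier G" "b \<in> carrier G" "c \<in> carrier G" "d \<in> carrier G"
  using assms by (auto simp: quadruple_def numeral_eq_Suc length_Suc_conv)

lemma hstep_quadruple:
  "i \<in> {2, 3, 4} \<Longrightarrow> quadruple t \<Longrightarrow> quadruple (hstep G (i, b) t)"
  by (elim quadrupleE, cases b) (auto simp: hstep_quadruple_simps quadruple_def)

lemma hstep_conj_tuple:
  "i \<in> {2, 3, 4} \<Longrightarrow> quadruple t \<Longrightarrow> g \<in> carrier G \<Longrightarrow>
    hstep G (i, b) (conj_tuple g t) = conj_tuple g (hstep G (i, b) t)"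
  by (elim quadrupleE, cases b) (auto simp: hstep_quadruple_simps conj_tuple_def group_word_simps)

lemma hstep_inverse:
  "i \<in> {2, 3, 4} \<Longrightarrow> quadruple t \<Longrightarrow> hstep G (i, \<not> b) (hstep G (i, b) t) = t"
  by (elim quadrupleE, cases b) (auto simp: hstep_quadruple_simps group_word_simps)

lemma act_word_conj_tuple:
  "braid_word w \<Longrightarrow> quadruple t \<Longrightarrow> g \<in> carrier G \<Longrightarrow>
    act_word G w (conj_tuple g t) = conj_tuple g (act_word G w t)"
  by (induction w arbitrary: t) (auto simp: braid_word_def hstep_quadruple hstep_conj_tuple)

lemma act_word_inv_word:
  "braid_word w \<Longrightarrow> quadruple t \<Longrightarrow> act_word G (inv_word w) (act_word G w t) = t"
proof (induction w arbitrary: t)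
  case Nil
  then show ?case by (simp add: inv_word_def)
next
  case (Cons l w)
  obtain i b where l: "l = (i, b)" and i: "i \<in> {2, 3, 4}" and w: "braid_word w"
    using Cons.prems(1) by (cases l) (auto simp: braid_word_def)
  have "inv_word (l # w) = inv_word w @ [(i, \<not> b)]"
    by (simp add: inv_word_def l)
  then show ?case
    using Cons.IH [OF w hstep_quadruple [OF i Cons.prems(2)]] hstep_inverse [OF i Cons.prems(2)]
    by (simp add: act_word_append l)
qed

lemma tclass_conv: "tclass G t = (\<lambda>g. conj_tuple g t) ` carrier G"
  by (auto simp: tclass_def conj_tuple_def)

lemma conj_tuple_one: "set t \<subseteq> carrier G \<Longrightarrow> conj_tuple \<one> t = t"
  by (induction t) (auto simp: conj_tuple_def)

lemma conj_tuple_conj_tuple: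
  "set t \<subseteq> carrier G \<Longrightarrow> g \<in> carrier G \<Longrightarrow> h \<in> carrier G \<Longrightarrow>
    conj_tuple h (conj_tuple g t) = conj_tuple (h \<otimes> g) t"
  by (induction t) (auto simp: conj_tuple_def group_word_simps)

lemma tclass_self: "set t \<subseteq> carrier G \<Longrightarrow> t \<in> tclass G t"
  using conj_tuple_one by (force simp: tclass_conv)

lemma set_conj_tuple: "set t \<subseteq> carrier G \<Longrightarrow> g \<in> carrier G \<Longrightarrow> set (conj_tuple g t) \<subseteq> carrier G"
  by (auto simp: conj_tuple_def)

lemma length_conj_tuple [simp]: "length (conj_tuple g t) = length t"
  by (simp add: conj_tuple_def)

lemma tclass_quadruple: "quadruple t \<Longrightarrow> tclass G t \<subseteq> Collect quadruple"
  using set_conj_tuple by (auto simp: tclass_conv quadruple_def)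

lemma tclass_conj_tuple:
  assumes t: "set t \<subseteq> carrier G" and g: "g \<in> carrier G"
  shows "tclass G (conj_tuple g t) = tclass G t"
proof -
  have sub: "tclass G (conj_tuple h s) \<subseteq> tclass G s" if "set s \<subseteq> carrier G" "h \<in> carrier G" for h s
    using that by (auto simp: tclass_conv conj_tuple_conj_tuple)
  have "conj_tuple (inv g) (conj_tuple g t) = t"
    using assms by (simp add: conj_tuple_conj_tuple conj_tuple_one)
  then show ?thesis
    using sub [OF t g] sub [OF set_conj_tuple [OF t g] inv_closed [OF g]] by simp
qed

lemma tclass_eqE:
  assumes "tclass G t = tclass G t'" and "set t \<subseteq> carrier G"
  obtains g where "g \<in> carrier G" and "t = conj_tuple g t'"
proof -
  have "t \<in> tclass G t'"
    using tclass_self [OF assms(2)] assms(1) by simp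
  then show thesis
    using that by (auto simp: tclass_conv)
qed

lemma cact_tclass:
  assumes "braid_word w" and "quadruple t"
  shows "cact G w (tclass G t) = tclass G (act_word G w t)"
  unfolding cact_def tclass_conv image_image
  by (rule image_cong [OF refl act_word_conj_tuple [OF assms]])

lemma cact_inv_word:
  assumes "braid_word w" and "A \<subseteq> Collect quadruple"
  shows "cact G (inv_word w) (cact G w A) = A"
proof -
  have "act_word G (inv_word w) (act_word G w t) = t" if "t \<in> A" for t
    using act_word_inv_word [OF assms(1)] assms(2) that by blast
  then have "(\<lambda>t. act_word G (inv_word w) (act_word G w t)) ` A = (\<lambda>t. t) ` A"
    by (rule image_cong [OF refl])
  then show ?thesis
    by (simp only: cact_def image_image image_ident)
qed

end

section \<open>Orbits of length two\<close>

definition fixes_or_swaps :: "('b \<Rightarrow> 'b) \<Rightarrow> 'b \<Rightarrow> 'b \<Rightarrow> bool" where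
  "fixes_or_swaps f x y \<longleftrightarrow> (f x = x \<and> f y = y) \<or> (f x = y \<and> f y = x)"

lemma fixes_or_swaps_comp:
  "fixes_or_swaps f x y \<Longrightarrow> fixes_or_swaps g x y \<Longrightarrow> fixes_or_swaps (g \<circ> f) x y"
  by (auto simp: fixes_or_swaps_def)

lemma fixes_or_swaps_left_inverse:
  "fixes_or_swaps f x y \<Longrightarrow> g (f x) = x \<Longrightarrow> g (f y) = y \<Longrightarrow> fixes_or_swaps g x y"
  by (auto simp: fixes_or_swaps_def)

lemma ncycles_fixed_pair:
  assumes "x \<noteq> y" "f x = x" "f y = y"
  shows "ncycles f {x, y} = 2"
proof -
  have "{(f ^^ n) z | n. True} = {z}" if "f z = z" for z
  proof -
    have "(f ^^ n) z = z" for n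
      using that by (induction n) auto
    then show ?thesis by auto
  qed
  moreover have "{{(f ^^ n) z | n. True} | z. z \<in> {x, y}} = {{(f ^^ n) x | n. True}, {(f ^^ n) y | n. True}}"
    by blast
  ultimately show ?thesis
    using assms by (simp add: ncycles_def)
qed

lemma ncycles_swapped_pair:
  assumes "f x = y" "f y = x"
  shows "ncycles f {x, y} = 1"
proof -
  have "(f ^^ n) x \<in> {x, y} \<and> (f ^^ n) y \<in> {x, y}" for n
    using assms by (induction n) auto
  moreover have "(f ^^ 0) x = x" "(f ^^ 1) x = y" "(f ^^ 0) y = y" "(f ^^ 1) y = x"
    using assms by simp_all
  ultimately have "{(f ^^ n) x | n. True} = {x, y}" and "{(f ^^ n) y | n. True} = {x, y}"
    by (auto, metis+)
  moreover have "{{(f ^^ n) z | n. True} | z. z \<in> {x, y}} = {{(f ^^ n) x | n. True}, {(f ^^ n) y | n. True}}"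
    by blast
  ultimately show ?thesis
    by (simp add: ncycles_def)
qed

lemma Nil_in_pure_words: "[] \<in> pure_words"
  unfolding pure_words_def by (rule CollectI, rule exI [of _ "[]"]) simp

lemma pure_gens_in_pure_words: "w \<in> pure_gens \<Longrightarrow> w \<in> pure_words"
  unfolding pure_words_def by (rule CollectI, rule exI [of _ "[w]"]) simp

context group
begin

lemma pure_words_fixes_or_swaps:
  assumes A: "A \<subseteq> Collect quadruple" and B: "B \<subseteq> Collect quadruple"
    and gens: "\<forall>w \<in> pure_gens. fixes_or_swaps (cact G w) A B"
    and w: "w \<in> pure_words"
  shows "fixes_or_swaps (cact G w) A B"
proof -
  have letter: "fixes_or_swaps (cact G u) A B" if u: "u \<in> pure_gens \<union> inv_word ` pure_gens" for u
  proof -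
    consider "u \<in> pure_gens" | v where "v \<in> pure_gens" "u = inv_word v"
      using u by blast
    then show ?thesis
    proof cases
      case (2 v)
      then show ?thesis
        using fixes_or_swaps_left_inverse [OF bspec [OF gens 2(1)]] braid_word_pure_gens [OF 2(1)]
          cact_inv_word [OF _ A] cact_inv_word [OF _ B] by blast
    qed (use gens in blast)
  qed
  obtain ws where "w = concat ws" and "set ws \<subseteq> pure_gens \<union> inv_word ` pure_gens"
    using w by (auto simp: pure_words_def)
  then show ?thesis
  proof (induction ws arbitrary: w)
    case Nil
    then show ?case by (simp add: fixes_or_swaps_def)
  next
    case (Cons u ws)
    then show ?case
      using fixes_or_swaps_comp [OF letter] by (simp add: cact_append comp_def)
  qed
qed

lemma B4_orbit_pair:
  assumes A: "A \<subseteq> Collect quadruple" and B: "B \<subseteq> Collect quadruple"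
    and gens: "\<forall>w \<in> pure_gens. fixes_or_swaps (cact G w) A B"
    and u: "u \<in> pure_gens" "cact G u A = B"
  shows "B4_orbit G A = {A, B}"
proof
  show "B4_orbit G A \<subseteq> {A, B}"
    using pure_words_fixes_or_swaps [OF A B gens] by (auto simp: B4_orbit_def fixes_or_swaps_def)
  have "A = cact G [] A" and "B = cact G u A"
    using u(2) by simp_all
  then show "{A, B} \<subseteq> B4_orbit G A"
    using Nil_in_pure_words pure_gens_in_pure_words [OF u(1)] unfolding B4_orbit_def by blast
qed

lemma card_rho4_image_pair:
  assumes A: "A \<subseteq> Collect quadruple" and B: "B \<subseteq> Collect quadruple" and "A \<noteq> B"
    and gens: "\<forall>w \<in> pure_gens. fixes_or_swaps (cact G w) A B"
    and u: "u \<in> pure_gens" "cact G u A = B"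
  shows "card (rho4_image G {A, B}) = 2"
proof -
  let ?Z = "{A, B}"
  note pure = pure_words_fixes_or_swaps [OF A B gens]
  have u_swaps: "cact G u B = A"
    using pure [OF pure_gens_in_pure_words [OF u(1)]] u(2) \<open>A \<noteq> B\<close>
    by (auto simp: fixes_or_swaps_def)
  have "rho4 G ?Z w \<in> {rho4 G ?Z [], rho4 G ?Z u}" if "w \<in> pure_words" for w
    using pure [OF that] unfolding fixes_or_swaps_def
  proof
    assume "cact G w A = A \<and> cact G w B = B"
    then have "rho4 G ?Z w = rho4 G ?Z []"
      unfolding rho4_def by (intro restrict_ext) auto
    then show ?thesis by simp
  next
    assume "cact G w A = B \<and> cact G w B = A"
    then have "rho4 G ?Z w = rho4 G ?Z u"
      unfolding rho4_def using u(2) u_swaps by (intro restrict_ext) (metis insertE singletonD)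
    then show ?thesis by simp
  qed
  then have "rho4_image G ?Z = {rho4 G ?Z [], rho4 G ?Z u}"
    using Nil_in_pure_words pure_gens_in_pure_words [OF u(1)] by (auto simp: rho4_image_def)
  moreover have "rho4 G ?Z [] A \<noteq> rho4 G ?Z u A"
    using u(2) \<open>A \<noteq> B\<close> by (simp add: rho4_def)
  then have "rho4 G ?Z [] \<noteq> rho4 G ?Z u"
    by metis
  ultimately show ?thesis
    by simp
qed

end

section \<open>The three orbits\<close>

text \<open>Taking the involution \<open>c\<close> as a parameter and \<open>s2 = s1\<inverse> c\<close> as an equation lets the
  simplifier rewrite every word in \<open>s1\<close>, \<open>s2\<close> to its normal form in
  \<open>\<langle>s1\<rangle> * \<langle>c | c\<^sup>2\<rangle>\<close>, which decides the Hurwitz computations below.\<close>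

locale involutive_product = group +
  fixes s1 s2 c
  assumes s1_closed [simp]: "s1 \<in> carrier G" and c_closed [simp]: "c \<in> carrier G"
    and c_involution: "c \<otimes> c = \<one>" and s2_eq: "s2 = inv s1 \<otimes> c"
begin

lemma s2_closed [simp]: "s2 \<in> carrier G"
  by (simp add: s2_eq)

lemma inv_c: "inv c = c"
  using c_involution by (simp add: inv_equality)

lemma c_cancel: "x \<in> carrier G \<Longrightarrow> c \<otimes> (c \<otimes> x) = x"
  using c_involution by (simp add: m_assoc [symmetric])

lemmas normal_form_simps = group_word_simps s2_eq c_involution inv_c c_cancel

abbreviation "tau1 \<equiv> [s1, s1, s2, s1 \<otimes> s2 \<otimes> inv s1]"
abbreviation "tau2 \<equiv> [s1, s2 \<otimes> s1 \<otimes> inv s2, s2, s2]"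
abbreviation "tau3 \<equiv> [s1, s2, s1, s2]"
abbreviation "tau4 \<equiv> [s1, s2, inv s2 \<otimes> s1 \<otimes> s2, s1 \<otimes> s2 \<otimes> inv s1]"
abbreviation "tau5 \<equiv> [s1, s2, s2, inv s2 \<otimes> s1 \<otimes> s2]"
abbreviation "tau6 \<equiv> [s1, s2, s1 \<otimes> s2 \<otimes> inv s1, s1]"

lemmas beta_defs = beta12_def beta13_def beta14_def beta23_def beta24_def beta34_def inv_word_def

lemma hurwitz_action_tau1_tau2:
  "act_word G beta12 tau1 = tau1"
  "act_word G beta12 tau2 = conj_tuple (c \<otimes> s1 \<otimes> c \<otimes> s1) tau2"
  "act_word G beta13 tau1 = conj_tuple (s1 \<otimes> c \<otimes> s1) tau2"
  "act_word G beta13 tau2 = conj_tuple (inv s1 \<otimes> c \<otimes> inv s1) tau1"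
  "act_word G beta14 tau1 = conj_tuple (c \<otimes> s1) tau2"
  "act_word G beta14 tau2 = conj_tuple (inv s1 \<otimes> c) tau1"
  "act_word G beta23 tau1 = conj_tuple s1 tau2"
  "act_word G beta23 tau2 = conj_tuple (inv s1) tau1"
  "act_word G beta24 tau1 = tau2"
  "act_word G beta24 tau2 = tau1"
  "act_word G beta34 tau1 = conj_tuple (inv s1 \<otimes> inv s1) tau1"
  "act_word G beta34 tau2 = tau2"
  by (simp_all add: beta_defs hstep_quadruple_simps conj_tuple_def normal_form_simps)

lemma hurwitz_action_tau3_tau4:
  "act_word G beta12 tau3 = conj_tuple c tau4"
  "act_word G beta12 tau4 = conj_tuple c tau3"
  "act_word G beta13 tau3 = conj_tuple (c \<otimes> s1 \<otimes> c \<otimes> s1) tau3"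
  "act_word G beta13 tau4 = tau4"
  "act_word G beta14 tau3 = conj_tuple (inv s1 \<otimes> c) tau4"
  "act_word G beta14 tau4 = conj_tuple (c \<otimes> s1) tau3"
  "act_word G beta23 tau3 = conj_tuple (inv s1) tau4"
  "act_word G beta23 tau4 = conj_tuple s1 tau3"
  "act_word G beta24 tau3 = conj_tuple (inv s1 \<otimes> inv s1) tau3"
  "act_word G beta24 tau4 = tau4"
  "act_word G beta34 tau3 = tau4"
  "act_word G beta34 tau4 = tau3"
  by (simp_all add: beta_defs hstep_quadruple_simps conj_tuple_def normal_form_simps)

lemma hurwitz_action_tau5_tau6:
  "act_word G beta12 tau5 = conj_tuple c tau6"
  "act_word G beta12 tau6 = conj_tuple c tau5"
  "act_word G beta13 tau5 = conj_tuple (c \<otimes> s1) tau6"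
  "act_word G beta13 tau6 = conj_tuple (inv s1 \<otimes> c) tau5"
  "act_word G beta14 tau5 = conj_tuple (c \<otimes> s1 \<otimes> c \<otimes> s1) tau5"
  "act_word G beta14 tau6 = tau6"
  "act_word G beta23 tau5 = tau5"
  "act_word G beta23 tau6 = conj_tuple (inv s1 \<otimes> inv s1) tau6"
  "act_word G beta24 tau5 = conj_tuple (inv s1) tau6"
  "act_word G beta24 tau6 = conj_tuple s1 tau5"
  "act_word G beta34 tau5 = tau6"
  "act_word G beta34 tau6 = tau5"
  by (simp_all add: beta_defs hstep_quadruple_simps conj_tuple_def normal_form_simps)

lemma braid_action_tau1_tau2:
  "cact G beta12 (tclass G tau1) = tclass G tau1"
  "cact G beta12 (tclass G tau2) = tclass G tau2"
  "cact G beta13 (tclass G tau1) = tclass G tau2"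
  "cact G beta13 (tclass G tau2) = tclass G tau1"
  "cact G beta14 (tclass G tau1) = tclass G tau2"
  "cact G beta14 (tclass G tau2) = tclass G tau1"
  "cact G beta23 (tclass G tau1) = tclass G tau2"
  "cact G beta23 (tclass G tau2) = tclass G tau1"
  "cact G beta24 (tclass G tau1) = tclass G tau2"
  "cact G beta24 (tclass G tau2) = tclass G tau1"
  "cact G beta34 (tclass G tau1) = tclass G tau1"
  "cact G beta34 (tclass G tau2) = tclass G tau2"
  by (simp_all add: cact_tclass quadruple_def hurwitz_action_tau1_tau2 tclass_conj_tuple)

lemma braid_action_tau3_tau4:
  "cact G beta12 (tclass G tau3) = tclass G tau4"
  "cact G beta12 (tclass G tau4) = tclass G tau3"
  "cact G beta13 (tclass G tau3) = tclass G tau3"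
  "cact G beta13 (tclass G tau4) = tclass G tau4"
  "cact G beta14 (tclass G tau3) = tclass G tau4"
  "cact G beta14 (tclass G tau4) = tclass G tau3"
  "cact G beta23 (tclass G tau3) = tclass G tau4"
  "cact G beta23 (tclass G tau4) = tclass G tau3"
  "cact G beta24 (tclass G tau3) = tclass G tau3"
  "cact G beta24 (tclass G tau4) = tclass G tau4"
  "cact G beta34 (tclass G tau3) = tclass G tau4"
  "cact G beta34 (tclass G tau4) = tclass G tau3"
  by (simp_all add: cact_tclass quadruple_def hurwitz_action_tau3_tau4 tclass_conj_tuple)

lemma braid_action_tau5_tau6:
  "cact G beta12 (tclass G tau5) = tclass G tau6"
  "cact G beta12 (tclass G tau6) = tclass G tau5"
  "cact G beta13 (tclass G tau5) = tclass G tau6"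
  "cact G beta13 (tclass G tau6) = tclass G tau5"
  "cact G beta14 (tclass G tau5) = tclass G tau5"
  "cact G beta14 (tclass G tau6) = tclass G tau6"
  "cact G beta23 (tclass G tau5) = tclass G tau5"
  "cact G beta23 (tclass G tau6) = tclass G tau6"
  "cact G beta24 (tclass G tau5) = tclass G tau6"
  "cact G beta24 (tclass G tau6) = tclass G tau5"
  "cact G beta34 (tclass G tau5) = tclass G tau6"
  "cact G beta34 (tclass G tau6) = tclass G tau5"
  by (simp_all add: cact_tclass quadruple_def hurwitz_action_tau5_tau6 tclass_conj_tuple)

lemma tau_products_eq_one:
  "s1 \<otimes> s1 \<otimes> s2 \<otimes> (s1 \<otimes> s2 \<otimes> inv s1) = \<one>"
  "s1 \<otimes> (s2 \<otimes> s1 \<otimes> inv s2) \<otimes> s2 \<otimes> s2 = \<one>"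
  "s1 \<otimes> s2 \<otimes> s1 \<otimes> s2 = \<one>"
  "s1 \<otimes> s2 \<otimes> (inv s2 \<otimes> s1 \<otimes> s2) \<otimes> (s1 \<otimes> s2 \<otimes> inv s1) = \<one>"
  "s1 \<otimes> s2 \<otimes> s2 \<otimes> (inv s2 \<otimes> s1 \<otimes> s2) = \<one>"
  "s1 \<otimes> s2 \<otimes> (s1 \<otimes> s2 \<otimes> inv s1) \<otimes> s1 = \<one>"
  by (simp_all add: normal_form_simps)

end

locale centerless_involutive_product = involutive_product +
  assumes generated: "generate G {s1, s2} = carrier G"
    and center_trivial: "grp_center G = {\<one>}"
    and nontrivial: "carrier G \<noteq> {\<one>}"
begin

lemma s1_s2_not_commute: "s1 \<otimes> s2 \<noteq> s2 \<otimes> s1"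
proof
  assume comm: "s1 \<otimes> s2 = s2 \<otimes> s1"
  have "x \<in> grp_center G" if "x \<in> {s1, s2}" for x
    using that comm by (intro commuting_with_generators_central [OF generated]) auto
  then have "{s1, s2} \<subseteq> {\<one>}"
    using center_trivial by blast
  then have "generate G {s1, s2} \<subseteq> {\<one>}"
    by (rule generate_subgroup_incl [OF _ triv_subgroup])
  then show False
    using generated nontrivial one_closed by (metis subset_singletonD empty_iff)
qed

lemma conj_fixing_generators:
  assumes "g \<in> carrier G" "g \<otimes> s1 \<otimes> inv g = s1" "g \<otimes> s2 \<otimes> inv g = s2"
  shows "g = \<one>"
proof -
  have "g \<in> grp_center G"
    using assms by (auto intro!: commuting_with_generators_central [OF generated]
        simp: conj_fixed_iff_commute)
  then show ?thesis
    using center_trivial by simp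
qed

lemma tclass_eq_imp_eq:
  assumes eq: "tclass G t = tclass G t'" and t: "set t \<subseteq> carrier G" and t': "set t' \<subseteq> carrier G"
    and "i < length t'" "t ! i = s1" "t' ! i = s1"
    and "j < length t'" "t ! j = s2" "t' ! j = s2"
  shows "t = t'"
proof -
  obtain g where g: "g \<in> carrier G" and conj: "t = conj_tuple g t'"
    using tclass_eqE [OF eq t] .
  have "g \<otimes> s1 \<otimes> inv g = s1" and "g \<otimes> s2 \<otimes> inv g = s2"
    using assms(4-) by (simp_all add: conj conj_tuple_def)
  then have "g = \<one>"
    using conj_fixing_generators [OF g] by blast
  then show ?thesis
    using conj t' by (simp add: conj_tuple_one)
qed

lemma tclass_tau1_neq_tau2: "tclass G tau1 \<noteq> tclass G tau2"
proof
  assume "tclass G tau1 = tclass G tau2"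
  then have "tau1 = tau2"
    by (rule tclass_eq_imp_eq [where i = 0 and j = 2]) simp_all
  then have "s2 \<otimes> s1 \<otimes> inv s2 = s1"
    by simp
  then show False
    using s1_s2_not_commute by (simp add: conj_fixed_iff_commute)
qed

lemma tclass_tau3_neq_tau4: "tclass G tau3 \<noteq> tclass G tau4"
proof
  assume "tclass G tau3 = tclass G tau4"
  then have "tau3 = tau4"
    by (rule tclass_eq_imp_eq [where i = 0 and j = 1]) simp_all
  then have "s1 \<otimes> s2 \<otimes> inv s1 = s2"
    by simp
  then show False
    using s1_s2_not_commute by (simp add: conj_fixed_iff_commute)
qed

lemma tclass_tau5_neq_tau6: "tclass G tau5 \<noteq> tclass G tau6"
proof
  assume "tclass G tau5 = tclass G tau6"
  then have "tau5 = tau6"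
    by (rule tclass_eq_imp_eq [where i = 0 and j = 1]) simp_all
  then have "s1 \<otimes> s2 \<otimes> inv s1 = s2"
    by simp
  then show False
    using s1_s2_not_commute by (simp add: conj_fixed_iff_commute)
qed

lemma tclass_in_Sigma_i:
  assumes "{a1, a2, a3, a4} \<subseteq> carrier G" "s1 \<in> {a1, a2, a3, a4}" "s2 \<in> {a1, a2, a3, a4}"
    and "a1 \<in> C1" "a2 \<in> C2" "a3 \<in> C3" "a4 \<in> C4" "a1 \<otimes> a2 \<otimes> a3 \<otimes> a4 = \<one>"
  shows "tclass G [a1, a2, a3, a4] \<in> Sigma_i G C1 C2 C3 C4"
proof -
  have "{s1, s2} \<subseteq> {a1, a2, a3, a4}"
    using assms(2,3) by blast
  then have "carrier G \<subseteq> generate G {a1, a2, a3, a4}"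
    using mono_generate generated by metis
  then have "generate G {a1, a2, a3, a4} = carrier G"
    using generate_incl [OF assms(1)] by blast
  then show ?thesis
    unfolding Sigma_i_def using assms(4-) by (intro CollectI exI [of _ "[a1, a2, a3, a4]"]) simp
qed

lemma Sigma_i_tau1_tau2:
  "{tclass G tau1, tclass G tau2} \<subseteq> Sigma_i G (conj_class G s1) (conj_class G s1) (conj_class G s2) (conj_class G s2)"
  by (simp add: tclass_in_Sigma_i tau_products_eq_one conj_class_self conj_class_conj conj_class_conj_inv)

lemma Sigma_i_tau3_tau4:
  "{tclass G tau3, tclass G tau4} \<subseteq> Sigma_i G (conj_class G s1) (conj_class G s2) (conj_class G s1) (conj_class G s2)"
  by (simp add: tclass_in_Sigma_i tau_products_eq_one conj_class_self conj_class_conj conj_class_conj_inv)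

lemma Sigma_i_tau5_tau6:
  "{tclass G tau5, tclass G tau6} \<subseteq> Sigma_i G (conj_class G s1) (conj_class G s2) (conj_class G s2) (conj_class G s1)"
  by (simp add: tclass_in_Sigma_i tau_products_eq_one conj_class_self conj_class_conj conj_class_conj_inv)

lemma B4_orbit_tau1_tau2:
  "B4_orbit G (tclass G tau1) = {tclass G tau1, tclass G tau2}"
  "card (rho4_image G {tclass G tau1, tclass G tau2}) = 2"
  using B4_orbit_pair [OF tclass_quadruple tclass_quadruple _ _ braid_action_tau1_tau2(3)]
    card_rho4_image_pair [OF tclass_quadruple tclass_quadruple tclass_tau1_neq_tau2 _ _ braid_action_tau1_tau2(3)]
  by (simp_all add: quadruple_def pure_gens_def fixes_or_swaps_def braid_action_tau1_tau2)

lemma genus_tau1_tau2: "genus G {tclass G tau1, tclass G tau2} = 0"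
  using tclass_tau1_neq_tau2
  by (simp add: genus_def braid_action_tau1_tau2 ncycles_fixed_pair ncycles_swapped_pair)

lemma B4_orbit_tau3_tau4:
  "B4_orbit G (tclass G tau3) = {tclass G tau3, tclass G tau4}"
  "card (rho4_image G {tclass G tau3, tclass G tau4}) = 2"
  using B4_orbit_pair [OF tclass_quadruple tclass_quadruple _ _ braid_action_tau3_tau4(1)]
    card_rho4_image_pair [OF tclass_quadruple tclass_quadruple tclass_tau3_neq_tau4 _ _ braid_action_tau3_tau4(1)]
  by (simp_all add: quadruple_def pure_gens_def fixes_or_swaps_def braid_action_tau3_tau4)

lemma genus_tau3_tau4: "genus G {tclass G tau3, tclass G tau4} = 0"
  using tclass_tau3_neq_tau4
  by (simp add: genus_def braid_action_tau3_tau4 ncycles_fixed_pair ncycles_swapped_pair)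

lemma B4_orbit_tau5_tau6:
  "B4_orbit G (tclass G tau5) = {tclass G tau5, tclass G tau6}"
  "card (rho4_image G {tclass G tau5, tclass G tau6}) = 2"
  using B4_orbit_pair [OF tclass_quadruple tclass_quadruple _ _ braid_action_tau5_tau6(1)]
    card_rho4_image_pair [OF tclass_quadruple tclass_quadruple tclass_tau5_neq_tau6 _ _ braid_action_tau5_tau6(1)]
  by (simp_all add: quadruple_def pure_gens_def fixes_or_swaps_def braid_action_tau5_tau6)

lemma genus_tau5_tau6: "genus G {tclass G tau5, tclass G tau6} = 0"
  using tclass_tau5_neq_tau6
  by (simp add: genus_def braid_action_tau5_tau6 ncycles_fixed_pair ncycles_swapped_pair)

end

theorem theorem2:
  fixes G (structure) and s1 s2 :: 'a
  assumes "group G" and "finite (carrier G)" and "carrier G \<noteq> {\<one>}"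
    and "grp_center G = {\<one>}"
    and "s1 \<in> carrier G" and "s2 \<in> carrier G"
    and "generate G {s1, s2} = carrier G"
    and "group.ord G (s1 \<otimes> s2) = 2"
  defines "e1 \<equiv> tclass G [s1, s1, s2, s1 \<otimes> s2 \<otimes> inv s1]"
    and "e2 \<equiv> cact G beta13 (tclass G [s1, s1, s2, s1 \<otimes> s2 \<otimes> inv s1])"
    and "e3 \<equiv> tclass G [s1, s2, s1, s2]"
    and "e4 \<equiv> cact G beta12 (tclass G [s1, s2, s1, s2])"
    and "e5 \<equiv> tclass G [s1, s2, s2, inv s2 \<otimes> s1 \<otimes> s2]"
    and "e6 \<equiv> cact G beta12 (tclass G [s1, s2, s2, inv s2 \<otimes> s1 \<otimes> s2])"
  shows
   "(e2 = tclass G [s1, s2 \<otimes> s1 \<otimes> inv s2, s2, s2] \<and>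
    {e1, e2} \<subseteq> Sigma_i G (conj_class G s1) (conj_class G s1) (conj_class G s2) (conj_class G s2) \<and>
    B4_orbit G e1 = {e1, e2} \<and> card {e1, e2} = 2 \<and>
    cact G beta12 e1 = e1 \<and> cact G beta12 e2 = e2 \<and>
    cact G beta13 e1 = e2 \<and> cact G beta13 e2 = e1 \<and>
    cact G beta14 e1 = e2 \<and> cact G beta14 e2 = e1 \<and>
    card (rho4_image G {e1, e2}) = 2 \<and>
    genus G {e1, e2} = 0) \<and>
   (e4 = tclass G [s1, s2, inv s2 \<otimes> s1 \<otimes> s2, s1 \<otimes> s2 \<otimes> inv s1] \<and>
    {e3, e4} \<subseteq> Sigma_i G (conj_class G s1) (conj_class G s2) (conj_class G s1) (conj_class G s2) \<and>
    B4_orbit G e3 = {e3, e4} \<and> card {e3, e4} = 2 \<and>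
    cact G beta12 e3 = e4 \<and> cact G beta12 e4 = e3 \<and>
    cact G beta14 e3 = e4 \<and> cact G beta14 e4 = e3 \<and>
    cact G beta13 e3 = e3 \<and> cact G beta13 e4 = e4 \<and>
    card (rho4_image G {e3, e4}) = 2 \<and>
    genus G {e3, e4} = 0) \<and>
   (e6 = tclass G [s1, s2, s1 \<otimes> s2 \<otimes> inv s1, s1] \<and>
    {e5, e6} \<subseteq> Sigma_i G (conj_class G s1) (conj_class G s2) (conj_class G s2) (conj_class G s1) \<and>
    B4_orbit G e5 = {e5, e6} \<and> card {e5, e6} = 2 \<and>
    cact G beta12 e5 = e6 \<and> cact G beta12 e6 = e5 \<and>
    cact G beta13 e5 = e6 \<and> cact G beta13 e6 = e5 \<and>
    cact G beta14 e5 = e5 \<and> cact G beta14 e6 = e6 \<and>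
    card (rho4_image G {e5, e6}) = 2 \<and>
    genus G {e5, e6} = 0)"
proof -
  interpret group G by fact
  have "(s1 \<otimes> s2) [^] (2::nat) = \<one>"
    using pow_ord_eq_1 [of "s1 \<otimes> s2"] assms by simp
  then have "(s1 \<otimes> s2) \<otimes> (s1 \<otimes> s2) = \<one>"
    using assms by (simp add: numeral_2_eq_2)
  then interpret centerless_involutive_product G s1 s2 "s1 \<otimes> s2"
    using assms by unfold_locales (simp_all add: inv_m_cancel_left)
  have "e2 = tclass G tau2" "e4 = tclass G tau4" "e6 = tclass G tau6"
    by (simp_all add: e2_def e4_def e6_def braid_action_tau1_tau2 braid_action_tau3_tau4 braid_action_tau5_tau6)
  then show ?thesis
    unfolding e1_def e3_def e5_def
    using tclass_tau1_neq_tau2 tclass_tau3_neq_tau4 tclass_tau5_neq_tau6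
      Sigma_i_tau1_tau2 Sigma_i_tau3_tau4 Sigma_i_tau5_tau6
    by (simp add: braid_action_tau1_tau2 braid_action_tau3_tau4 braid_action_tau5_tau6
        B4_orbit_tau1_tau2 B4_orbit_tau3_tau4 B4_orbit_tau5_tau6 genus_tau1_tau2 genus_tau3_tau4 genus_tau5_tau6)
qed

end
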